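(* Let $a\in\mathbb{Z}_{25}$ satisfy $2a^2-2a+1\equiv 0\pmod{25}$ and let $(\mathbb{Z}_{25},\cdot)$ be the quadratical quasigroup with $x\cdot y=ax+(1-a)y \pmod{25}$. Then $(\mathbb{Z}_{25},\cdot)$ is not isomorphic to any of $Q1\times Q1$, $Q1\times (Q1)^*$, $(Q1)^*\times Q1$, $(Q1)^*\times(Q1)^*$.
   Context: $Q1$ denotes (up to isomorphism) the quadratical quasigroup $(\mathbb{Z}_5,\cdot)$ with $x\cdot y=4x+2y\pmod 5$, and $(Q1)^*$ its dual, isomorphic to $(\mathbb{Z}_5,\circ)$ with $x\circ y=2x+4y\pmod 5$ (the dual of a groupoid $(Q,\cdot)$ is $(Q,* )$ with $x*y=y\cdot x$). Products are direct products with componentwise operation. A quadratical quasigroup is a quasigroup satisfying $xy\cdot x=zx\cdot yz$. *)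

theory Defs
  imports Main "HOL-Number_Theory.Cong"
begin

definition groupoid_iso :: "'a set \<Rightarrow> ('a \<Rightarrow> 'a \<Rightarrow> 'a) \<Rightarrow> 'b set \<Rightarrow> ('b \<Rightarrow> 'b \<Rightarrow> 'b) \<Rightarrow> bool" where
  "groupoid_iso A m B n \<longleftrightarrow>
     (\<exists>f. bij_betw f A B \<and> (\<forall>x\<in>A. \<forall>y\<in>A. f (m x y) = n (f x) (f y)))"

definition Zn :: "int \<Rightarrow> int set" where
  "Zn n = {0..<n}"

definition q1_op :: "int \<Rightarrow> int \<Rightarrow> int" where
  "q1_op x y = (4 * x + 2 * y) mod 5"

definition dual_op :: "('a \<Rightarrow> 'a \<Rightarrow> 'a) \<Rightarrow> 'a \<Rightarrow> 'a \<Rightarrow> 'a" where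
  "dual_op m x y = m y x"

definition prod_op :: "('a \<Rightarrow> 'a \<Rightarrow> 'a) \<Rightarrow> ('b \<Rightarrow> 'b \<Rightarrow> 'b) \<Rightarrow> 'a \<times> 'b \<Rightarrow> 'a \<times> 'b \<Rightarrow> 'a \<times> 'b" where
  "prod_op m n p q = (m (fst p) (fst q), n (snd p) (snd q))"

definition aff25_op :: "int \<Rightarrow> int \<Rightarrow> int \<Rightarrow> int" where
  "aff25_op a x y = (a * x + (1 - a) * y) mod 25"

end

theory Submission
  imports Defs
begin

text \<open>A groupoid invariant separates the two sides. In \<open>Q1\<close> and \<open>(Q1)\<^sup>*\<close> every left
  translation \<open>x \<mapsto> y\<cdot>x\<close> is affine with linear part \<open>2\<close> or \<open>4\<close> and fixes \<open>y\<close>, so its fourth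
  power is the identity, and this identity passes to direct products. In \<open>(\<int>\<^sub>2\<^sub>5,\<cdot>)\<close> the
  congruence forces \<open>a \<in> {4, 22}\<close>, and then the fourth power of \<open>x \<mapsto> 1\<cdot>x\<close> has linear
  part \<open>(1 - a)\<^sup>4 \<equiv> 6\<close>, so it moves \<open>0\<close>. The identity is preserved by isomorphisms.\<close>

definition left_translations_periodic :: "nat \<Rightarrow> 'a set \<Rightarrow> ('a \<Rightarrow> 'a \<Rightarrow> 'a) \<Rightarrow> bool" where
  "left_translations_periodic k A m \<longleftrightarrow> (\<forall>x\<in>A. \<forall>y\<in>A. (m y ^^ k) x = x)"

lemma groupoid_iso_funpow_left:
  assumes hom: "\<forall>x\<in>A. \<forall>y\<in>A. f (m x y) = n (f x) (f y)"
    and closed: "\<And>x y. x \<in> A \<Longrightarrow> y \<in> A \<Longrightarrow> m x y \<in> A"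
    and "x \<in> A" "y \<in> A"
  shows "(m y ^^ k) x \<in> A \<and> f ((m y ^^ k) x) = (n (f y) ^^ k) (f x)"
  by (induction k) (use assms in auto)

lemma groupoid_iso_left_translations_periodic:
  assumes "groupoid_iso A m B n"
    and closed: "\<And>x y. x \<in> A \<Longrightarrow> y \<in> A \<Longrightarrow> m x y \<in> A"
    and "left_translations_periodic k B n"
  shows "left_translations_periodic k A m"
  unfolding left_translations_periodic_def
proof (intro ballI)
  fix x y assume xy: "x \<in> A" "y \<in> A"
  obtain f where bij: "bij_betw f A B"
    and hom: "\<forall>x\<in>A. \<forall>y\<in>A. f (m x y) = n (f x) (f y)"
    using assms(1) unfolding groupoid_iso_def by blast
  have "f x \<in> B" "f y \<in> B" using bij xy bij_betwE by blast+
  then have "(n (f y) ^^ k) (f x) = f x"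
    using assms(3) unfolding left_translations_periodic_def by blast
  with groupoid_iso_funpow_left[OF hom closed xy]
  have "(m y ^^ k) x \<in> A" "f ((m y ^^ k) x) = f x" by auto
  then show "(m y ^^ k) x = x"
    using xy bij_betw_imp_inj_on[OF bij] by (meson inj_onD)
qed

lemma funpow_prod_op:
  "(prod_op m n p ^^ k) q = ((m (fst p) ^^ k) (fst q), (n (snd p) ^^ k) (snd q))"
  by (induction k) (simp_all add: prod_op_def)

lemma left_translations_periodic_prod_op:
  assumes "left_translations_periodic k A m" "left_translations_periodic k B n"
  shows "left_translations_periodic k (A \<times> B) (prod_op m n)"
  using assms by (auto simp: left_translations_periodic_def funpow_prod_op)

lemma Zn5_cases: "x \<in> Zn 5 \<Longrightarrow> x = 0 \<or> x = 1 \<or> x = 2 \<or> x = 3 \<or> x = 4"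
  by (auto simp: Zn_def)

lemma left_translations_periodic_q1: "left_translations_periodic 4 (Zn 5) q1_op"
  unfolding left_translations_periodic_def
  by (auto dest!: Zn5_cases simp: q1_op_def numeral_eq_Suc)

lemma left_translations_periodic_dual_q1: "left_translations_periodic 4 (Zn 5) (dual_op q1_op)"
  unfolding left_translations_periodic_def
  by (auto dest!: Zn5_cases simp: q1_op_def dual_op_def numeral_eq_Suc)

lemma aff25_op_closed: "aff25_op a x y \<in> Zn 25"
  by (simp add: aff25_op_def Zn_def)

lemma not_left_translations_periodic_aff25:
  assumes "a = 4 \<or> a = 22"
  shows "\<not> left_translations_periodic 4 (Zn 25) (aff25_op a)"
proof -
  have "(aff25_op a 1 ^^ 4) 0 \<noteq> 0"
    using assms by (auto simp: aff25_op_def numeral_eq_Suc)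
  moreover have "(0::int) \<in> Zn 25" "(1::int) \<in> Zn 25" by (auto simp: Zn_def)
  ultimately show ?thesis unfolding left_translations_periodic_def by blast
qed

lemma quadratical_parameter_mod25:
  assumes "a \<in> Zn 25" "[2 * a ^ 2 - 2 * a + 1 = 0] (mod 25)"
  shows "a = 4 \<or> a = 22"
proof -
  have "a \<in> {0,1,2,3,4,5,6,7,8,9,10,11,12,13,14,15,16,17,18,19,20,21,22,23,24}"
    using assms(1) by (simp add: Zn_def atLeastLessThan_iff) presburger
  then show ?thesis using assms(2) by (auto simp: cong_def)
qed

theorem theorem7p2:
  fixes a :: int
  assumes "a \<in> Zn 25"
    and "[2 * a ^ 2 - 2 * a + 1 = 0] (mod 25)"
  shows "\<not> groupoid_iso (Zn 25) (aff25_op a) (Zn 5 \<times> Zn 5) (prod_op q1_op q1_op)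
       \<and> \<not> groupoid_iso (Zn 25) (aff25_op a) (Zn 5 \<times> Zn 5) (prod_op q1_op (dual_op q1_op))
       \<and> \<not> groupoid_iso (Zn 25) (aff25_op a) (Zn 5 \<times> Zn 5) (prod_op (dual_op q1_op) q1_op)
       \<and> \<not> groupoid_iso (Zn 25) (aff25_op a) (Zn 5 \<times> Zn 5) (prod_op (dual_op q1_op) (dual_op q1_op))"
proof -
  have not_periodic: "\<not> left_translations_periodic 4 (Zn 25) (aff25_op a)"
    using not_left_translations_periodic_aff25 quadratical_parameter_mod25[OF assms] .
  have "\<not> groupoid_iso (Zn 25) (aff25_op a) (Zn 5 \<times> Zn 5) (prod_op m n)"
    if "left_translations_periodic 4 (Zn 5) m" "left_translations_periodic 4 (Zn 5) n" for m n
    using groupoid_iso_left_translations_periodic[where m = "aff25_op a", OF _ aff25_op_closed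
        left_translations_periodic_prod_op[OF that]] not_periodic by blast
  then show ?thesis
    using left_translations_periodic_q1 left_translations_periodic_dual_q1 by blast
qed

end
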